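(* For every positive integer $m$, the Bayesian Price of Anarchy of the proportional allocation mechanism over instances with $m$ resources in which all valuation functions are concave is at least $\frac{\sqrt{m}}{2}$. That is, there exist an instance with $m$ resources and concave valuations (in every realization) and a Bayesian Nash equilibrium $\mathbf{B}$ of it such that $\mathbb{E}_{\mathbf{v}}[\mathrm{SW}(\mathbf{o}^{\mathbf{v}})] \ge \frac{\sqrt{m}}{2}\, \mathbb{E}_{\mathbf{v},\mathbf{b}\sim \mathbf{B}(\mathbf{v})}[\mathrm{SW}(\mathbf{b})]$.
   Context: There are $n$ agents and $m$ divisible resources, each of unit supply. Each agent $i$ has a valuation $v_i:[0,1]^m\to\mathbb{R}_{\ge 0}$ with $v_i(\mathbf{0})=0$ that is monotone non-decreasing (componentwise). A valuation is concave if it is a concave function on $[0,1]^m$. Proportional allocation mechanism: each agent $i$ submits a bid $b_{ij}\ge 0$ for every resource $j$; agent $i$ receives the fraction $x_{ij}(\mathbf{b})=b_{ij}/\sum_{k=1}^n b_{kj}$ of resource $j$ (if all bids on $j$ are $0$, the allocation of $j$ is defined arbitrarily but consistently) and pays $q_i(\mathbf{b})=\sum_{j}b_{ij}$. The utility is $u_i(\mathbf{b})=v_i(x_i(\mathbf{b}))-q_i(\mathbf{b})$, where $x_i=(x_{ij})_j$. The social welfare of an allocation is $\mathrm{SW}(\mathbf{x})=\sum_i v_i(x_i)$ and $\mathrm{SW}(\mathbf{b})=\mathrm{SW}(\mathbf{x}(\mathbf{b}))$; $\mathbf{o}^{\mathbf{v}}$ denotes a welfare-maximizing allocation (with $x_{ij}\ge0$,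 $\sum_i x_{ij}\le 1$) for valuation profile $\mathbf{v}$. Bayesian setting: each $v_i$ is drawn independently from a publicly known distribution $D_i$ over a set $V_i$ of valuations. A Bayesian Nash equilibrium is a profile $\mathbf{B}(\mathbf{v})=\times_i B_i(v_i)$, where $B_i(v_i)$ is a distribution over bid vectors of agent $i$, such that for every agent $i$, every $v_i$ and every bid vector $b_i'$, $\mathbb{E}_{\mathbf{v}_{-i},\mathbf{b}}[u_i(\mathbf{b})]\ge \mathbb{E}_{\mathbf{v}_{-i},\mathbf{b}}[u_i(b_i',\mathbf{b}_{-i})]$ (utilities evaluated with agent $i$'s valuation $v_i$). The Bayesian Price of Anarchy over a class of instances is the supremum, over instances in the class and Bayesian Nash equilibria $\mathbf{B}$, of $\mathbb{E}_{\mathbf{v}}[\mathrm{SW}(\mathbf{o}^{\mathbf{v}})]/\mathbb{E}_{\mathbf{v},\mathbf{b}\sim\mathbf{B}}[\mathrm{SW}(\mathbf{b})]$. *)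

theory Defs
  imports "HOL-Probability.Probability"
begin

type_synonym valuation = "(nat \<Rightarrow> real) \<Rightarrow> real"
type_synonym bidvec = "nat \<Rightarrow> real"

text \<open>Resources are indexed by 0..<m, agents by 0..<n. A bundle is a vector
 in [0,1]^m, represented as a function nat => real vanishing outside 0..<m.\<close>
definition cube :: "nat \<Rightarrow> (nat \<Rightarrow> real) set" where
  "cube m = {x. (\<forall>j<m. 0 \<le> x j \<and> x j \<le> 1) \<and> (\<forall>j. m \<le> j \<longrightarrow> x j = 0)}"

definition is_valuation :: "nat \<Rightarrow> valuation \<Rightarrow> bool" where
  "is_valuation m v \<longleftrightarrow> v (\<lambda>_. 0) = 0 \<and> (\<forall>x\<in>cube m. 0 \<le> v x) \<and>
     (\<forall>x\<in>cube m. \<forall>y\<in>cube m. (\<forall>j. x j \<le> y j) \<longrightarrow> v x \<le> v y)"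

definition concave_valuation :: "nat \<Rightarrow> valuation \<Rightarrow> bool" where
  "concave_valuation m v \<longleftrightarrow> is_valuation m v \<and>
     (\<forall>x\<in>cube m. \<forall>y\<in>cube m. \<forall>t::real. 0 \<le> t \<and> t \<le> 1 \<longrightarrow>
        t * v x + (1 - t) * v y \<le> v (\<lambda>j. t * x j + (1 - t) * y j))"

definition valid_bid :: "nat \<Rightarrow> bidvec \<Rightarrow> bool" where
  "valid_bid m b \<longleftrightarrow> (\<forall>j. 0 \<le> b j) \<and> (\<forall>j. m \<le> j \<longrightarrow> b j = 0)"

text \<open>Tie rule: tie n i j is the share of resource j given to agent i when there are
 n agents and all bids on j are zero (arbitrary but consistent).\<close>
definition valid_tie_rule :: "(nat \<Rightarrow> nat \<Rightarrow> nat \<Rightarrow> real) \<Rightarrow> bool" where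
  "valid_tie_rule tie \<longleftrightarrow> (\<forall>n i j. 0 \<le> tie n i j) \<and> (\<forall>n j. (\<Sum>i<n. tie n i j) \<le> 1)"

text \<open>Proportional allocation; b i j is agent i's bid on resource j.\<close>
definition alloc :: "(nat \<Rightarrow> nat \<Rightarrow> nat \<Rightarrow> real) \<Rightarrow> nat \<Rightarrow> nat \<Rightarrow> (nat \<Rightarrow> bidvec) \<Rightarrow> nat \<Rightarrow> nat \<Rightarrow> real" where
  "alloc tie n m b i j = (if j < m then
      (if (\<Sum>k<n. b k j) = 0 then tie n i j else b i j / (\<Sum>k<n. b k j)) else 0)"

definition payment :: "nat \<Rightarrow> (nat \<Rightarrow> bidvec) \<Rightarrow> nat \<Rightarrow> real" where
  "payment m b i = (\<Sum>j<m. b i j)"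

definition utility :: "(nat \<Rightarrow> nat \<Rightarrow> nat \<Rightarrow> real) \<Rightarrow> nat \<Rightarrow> nat \<Rightarrow> valuation \<Rightarrow> (nat \<Rightarrow> bidvec) \<Rightarrow> nat \<Rightarrow> real" where
  "utility tie n m vi b i = vi (alloc tie n m b i) - payment m b i"

definition SW_bids :: "(nat \<Rightarrow> nat \<Rightarrow> nat \<Rightarrow> real) \<Rightarrow> nat \<Rightarrow> nat \<Rightarrow> (nat \<Rightarrow> valuation) \<Rightarrow> (nat \<Rightarrow> bidvec) \<Rightarrow> real" where
  "SW_bids tie n m v b = (\<Sum>i<n. v i (alloc tie n m b i))"

definition feasible :: "nat \<Rightarrow> nat \<Rightarrow> (nat \<Rightarrow> nat \<Rightarrow> real) set" where
  "feasible n m = {x. (\<forall>i j. 0 \<le> x i j) \<and> (\<forall>i j. m \<le> j \<longrightarrow> x i j = 0) \<and>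
                      (\<forall>j<m. (\<Sum>i<n. x i j) \<le> 1)}"

definition welfare :: "nat \<Rightarrow> (nat \<Rightarrow> valuation) \<Rightarrow> (nat \<Rightarrow> nat \<Rightarrow> real) \<Rightarrow> real" where
  "welfare n v x = (\<Sum>i<n. v i (x i))"

definition OPT :: "nat \<Rightarrow> nat \<Rightarrow> (nat \<Rightarrow> valuation) \<Rightarrow> real" where
  "OPT n m v = (SUP x\<in>feasible n m. welfare n v x)"

definition vdist :: "nat \<Rightarrow> (nat \<Rightarrow> valuation pmf) \<Rightarrow> (nat \<Rightarrow> valuation) pmf" where
  "vdist n D = Pi_pmf {..<n} (\<lambda>_. 0) D"

definition bdist :: "nat \<Rightarrow> (nat \<Rightarrow> valuation \<Rightarrow> bidvec pmf) \<Rightarrow> (nat \<Rightarrow> valuation) \<Rightarrow> (nat \<Rightarrow> bidvec) pmf" where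
  "bdist n B v = Pi_pmf {..<n} (\<lambda>_. 0) (\<lambda>i. B i (v i))"

definition strategies_ok :: "nat \<Rightarrow> nat \<Rightarrow> (nat \<Rightarrow> valuation pmf) \<Rightarrow> (nat \<Rightarrow> valuation \<Rightarrow> bidvec pmf) \<Rightarrow> bool" where
  "strategies_ok m n D B \<longleftrightarrow> (\<forall>i<n. \<forall>vi\<in>set_pmf (D i).
      finite (set_pmf (B i vi)) \<and> (\<forall>b\<in>set_pmf (B i vi). valid_bid m b))"

definition is_BNE :: "(nat \<Rightarrow> nat \<Rightarrow> nat \<Rightarrow> real) \<Rightarrow> nat \<Rightarrow> nat \<Rightarrow> (nat \<Rightarrow> valuation pmf) \<Rightarrow> (nat \<Rightarrow> valuation \<Rightarrow> bidvec pmf) \<Rightarrow> bool" where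
  "is_BNE tie m n D B \<longleftrightarrow> (\<forall>i<n. \<forall>vi\<in>set_pmf (D i). \<forall>b'. valid_bid m b' \<longrightarrow>
      measure_pmf.expectation (vdist n (D(i := return_pmf vi)))
        (\<lambda>v. measure_pmf.expectation (bdist n B v) (\<lambda>b. utility tie n m vi (b(i := b')) i))
      \<le> measure_pmf.expectation (vdist n (D(i := return_pmf vi)))
        (\<lambda>v. measure_pmf.expectation (bdist n B v) (\<lambda>b. utility tie n m vi b i)))"

definition exp_SW :: "(nat \<Rightarrow> nat \<Rightarrow> nat \<Rightarrow> real) \<Rightarrow> nat \<Rightarrow> nat \<Rightarrow> (nat \<Rightarrow> valuation pmf) \<Rightarrow> (nat \<Rightarrow> valuation \<Rightarrow> bidvec pmf) \<Rightarrow> real" where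
  "exp_SW tie m n D B = measure_pmf.expectation (vdist n D)
      (\<lambda>v. measure_pmf.expectation (bdist n B v) (\<lambda>b. SW_bids tie n m v b))"

definition exp_OPT :: "nat \<Rightarrow> nat \<Rightarrow> (nat \<Rightarrow> valuation pmf) \<Rightarrow> real" where
  "exp_OPT m n D = measure_pmf.expectation (vdist n D) (\<lambda>v. OPT n m v)"

end

theory Submission
  imports Defs
begin

text \<open>Two agents suffice. Agent 0 values only one resource J, drawn uniformly from the m resources;
  agent 1 has the Leontief valuation s \<cdot> min_j x_j with s = \<surd>m. With \<sigma> = 1/(1+s), agent 0
  bidding s\<sigma>^2 on J and agent 1 bidding \<sigma>^2 on every resource is an equilibrium: every
  best-response check reduces to AM-GM, and agent 1, who does not know J, can only gain on average
  over J, where its payment is charged m = s^2 times. Agent 1 then receives only \<sigma> of the bundle,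
  so the expected welfare is 2s\<sigma> < 2, while giving everything to agent 1 yields s.\<close>

lemma sum_lessThan_2: "(\<Sum>k<(2::nat). f k) = f 0 + (f 1 :: real)"
  by (simp add: numeral_2_eq_2)

lemma vdist_two_agents:
  assumes "E 1 = return_pmf w"
  shows "vdist 2 E = map_pmf (\<lambda>y i. if i = 0 then y else if i = 1 then w else (\<lambda>_. 0)) (E 0)"
proof -
  have agents: "{..<2::nat} = insert 0 {1}" by auto
  have "E (Suc 0) = return_pmf w" using assms by simp
  then show ?thesis
    unfolding vdist_def agents
    by (subst Pi_pmf_insert)
       (auto simp: Pi_pmf_singleton pair_return_pmf2 pmf.map_comp o_def fun_eq_iff intro!: pmf.map_cong)
qed

lemma bdist_return_pmf:
  "bdist n (\<lambda>i v. return_pmf (f i v)) v = return_pmf (\<lambda>i. if i < n then f i (v i) else (\<lambda>_. 0))"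
  unfolding bdist_def by simp

lemma alloc_two_agents:
  assumes "j < m" "0 < b 0 j + b 1 j"
  shows "alloc tie 2 m b i j = b i j / (b 0 j + b 1 j)"
  using assms unfolding alloc_def sum_lessThan_2 by auto

lemma welfare_le_OPT:
  assumes "\<forall>i<n. is_valuation m (v i)" and "x \<in> feasible n m"
  shows "welfare n v x \<le> OPT n m v"
proof -
  let ?everything = "\<lambda>j. if j < m then 1 else 0 :: real"
  have in_cube: "y i \<in> cube m" if "y \<in> feasible n m" "i < n" for y i
  proof -
    have "y i j \<le> (\<Sum>k<n. y k j)" if "j < m" for j
      using \<open>y \<in> feasible n m\<close> \<open>i < n\<close> by (intro member_le_sum) (auto simp: feasible_def)
    then show ?thesis using \<open>y \<in> feasible n m\<close> by (force simp: feasible_def cube_def)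
  qed
  have "?everything \<in> cube m" by (simp add: cube_def)
  then have "welfare n v y \<le> (\<Sum>i<n. v i ?everything)" if "y \<in> feasible n m" for y
    unfolding welfare_def using assms(1) in_cube[OF that]
    by (intro sum_mono) (auto simp: is_valuation_def cube_def)
  then have "bdd_above (welfare n v ` feasible n m)" by (rule bdd_aboveI2)
  then show ?thesis unfolding OPT_def using assms(2) by (rule cSUP_upper2) simp
qed

text \<open>Against an opponent bid of s q^2, spending b on a resource worth 1/s per unit gains at most
  (1 - s q)^2 / s; the bound rests on the AM-GM inequality q^2/c + c \<ge> 2 q with c = b + s q^2.\<close>
lemma proportional_share_gain_le:
  fixes b q s :: real
  assumes "0 \<le> b" "0 < q" "0 < s"
  shows "b / (b + s * q^2) - s * b \<le> (1 - s * q)^2"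
proof -
  define c where "c = b + s * q^2"
  have c_pos: "0 < c" using assms by (simp add: c_def add_nonneg_pos)
  have "2 * q \<le> q^2 / c + c"
  proof -
    have "0 \<le> (c - q)^2 / c" using c_pos by simp
    also have "\<dots> = q^2 / c + c - 2 * q" using c_pos by (simp add: power2_eq_square field_simps)
    finally show ?thesis by simp
  qed
  then have "s * (2 * q) \<le> s * (q^2 / c + c)" using assms(3) by simp
  moreover have "b / c = 1 - s * q^2 / c" using c_pos by (simp add: c_def field_simps)
  ultimately show ?thesis by (simp add: c_def power2_eq_square algebra_simps)
qed

definition coordinate_valuation :: "nat \<Rightarrow> valuation" where
  "coordinate_valuation J = (\<lambda>x. x J)"

definition leontief_valuation :: "nat \<Rightarrow> real \<Rightarrow> valuation" where
  "leontief_valuation m c = (\<lambda>x. c * Min ((\<lambda>j. x j) ` {..<m}))"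

lemma concave_valuation_coordinate:
  "J < m \<Longrightarrow> concave_valuation m (coordinate_valuation J)"
  unfolding concave_valuation_def is_valuation_def cube_def coordinate_valuation_def by auto

lemma concave_valuation_leontief:
  assumes "1 \<le> m" "0 \<le> c"
  shows "concave_valuation m (leontief_valuation m c)"
proof -
  let ?min = "\<lambda>x::nat \<Rightarrow> real. Min ((\<lambda>j. x j) ` {..<m})"
  have nonempty: "{..<m} \<noteq> {}" using assms(1) by (simp add: lessThan_empty_iff)
  have min_ge: "z \<le> ?min x \<longleftrightarrow> (\<forall>j<m. z \<le> x j)" for z x
    using nonempty by (auto simp: Min_ge_iff)
  have "?min (\<lambda>_. 0) = 0"
    using nonempty by (intro Min_eqI) auto
  moreover have "0 \<le> ?min x" if "x \<in> cube m" for x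
    using that by (simp add: min_ge cube_def)
  moreover have "?min x \<le> ?min y" if "\<forall>j. x j \<le> y j" for x y
    using that by (auto simp: min_ge intro: order_trans[OF Min_le])
  moreover have "t * (c * ?min x) + (1 - t) * (c * ?min y) \<le> c * ?min (\<lambda>j. t * x j + (1 - t) * y j)"
    if "0 \<le> t" "t \<le> 1" for x y and t :: real
  proof -
    have "t * ?min x + (1 - t) * ?min y \<le> ?min (\<lambda>j. t * x j + (1 - t) * y j)"
      using that by (auto simp: min_ge intro!: add_mono mult_left_mono Min_le)
    from mult_left_mono[OF this assms(2)] show ?thesis by (simp add: algebra_simps)
  qed
  ultimately show ?thesis
    using assms(2) unfolding concave_valuation_def is_valuation_def leontief_valuation_def
    by (auto intro: mult_left_mono)
qed

locale sqrt_gap_instance =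
  fixes m :: nat
  assumes m_pos: "1 \<le> m"
begin

definition s :: real where "s = sqrt (real m)"

definition \<sigma> :: real where "\<sigma> = 1 / (1 + s)"

lemma s_ge_1: "1 \<le> s"
  using m_pos by (simp add: s_def)

lemma sigma_pos: "0 < \<sigma>"
  using s_ge_1 by (simp add: \<sigma>_def)

lemma s_sigma: "s * \<sigma> = 1 - \<sigma>"
  using s_ge_1 by (simp add: \<sigma>_def field_simps)

lemma s_squared: "s^2 = real m"
  by (simp add: s_def)

lemma lessThan_m_nonempty: "{..<m} \<noteq> {}"
  using m_pos by (simp add: lessThan_empty_iff)

text \<open>A coordinate valuation reveals its resource J as the unit vector on which it equals 1.\<close>
definition demand_bid :: "valuation \<Rightarrow> bidvec" where
  "demand_bid v = (\<lambda>j. if j < m \<and> v (\<lambda>k. if k = j then 1 else 0) = 1 then s * \<sigma>^2 else 0)"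

definition spread_bid :: bidvec where
  "spread_bid = (\<lambda>j. if j < m then \<sigma>^2 else 0)"

definition strategy :: "nat \<Rightarrow> valuation \<Rightarrow> bidvec pmf" where
  "strategy i v = return_pmf (if i = 0 then demand_bid v else spread_bid)"

definition prior :: "nat \<Rightarrow> valuation pmf" where
  "prior i = (if i = 0 then map_pmf coordinate_valuation (pmf_of_set {..<m})
              else return_pmf (leontief_valuation m s))"

definition profile :: "valuation \<Rightarrow> nat \<Rightarrow> valuation" where
  "profile y = (\<lambda>i. if i = 0 then y else if i = 1 then leontief_valuation m s else (\<lambda>_. 0))"

definition bids :: "valuation \<Rightarrow> nat \<Rightarrow> bidvec" where
  "bids y = (\<lambda>i. if i < 2 then (if i = 0 then demand_bid y else spread_bid) else (\<lambda>_. 0))"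

lemma vdist_prior: "vdist 2 prior = map_pmf profile (prior 0)"
  by (subst vdist_two_agents[where w = "leontief_valuation m s"])
     (auto simp: prior_def profile_def[abs_def])

lemma vdist_prior_update_0: "vdist 2 (prior(0 := return_pmf y)) = return_pmf (profile y)"
  by (subst vdist_two_agents[where w = "leontief_valuation m s"])
     (auto simp: prior_def profile_def[abs_def])

lemma bdist_strategy: "bdist 2 strategy v = return_pmf (bids (v 0))"
  unfolding strategy_def[abs_def] bdist_return_pmf by (auto simp: bids_def fun_eq_iff)

lemma bids_profile: "bids (profile y 0) = bids y"
  by (simp add: profile_def)

lemma set_pmf_prior_0: "set_pmf (prior 0) = coordinate_valuation ` {..<m}"
  using lessThan_m_nonempty by (simp add: prior_def)

lemma expectation_prior:
  "measure_pmf.expectation (vdist 2 prior) f = (\<Sum>J<m. f (profile (coordinate_valuation J))) / real m"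
  unfolding vdist_prior using lessThan_m_nonempty by (simp add: prior_def integral_pmf_of_set)

lemma bids_coordinate_valuation:
  "J < m \<Longrightarrow> bids (coordinate_valuation J) 0 = (\<lambda>j. if j = J then s * \<sigma>^2 else 0)"
  by (auto simp: bids_def demand_bid_def coordinate_valuation_def fun_eq_iff)

text \<open>Stated with Suc 0, the simp normal form of 1 :: nat.\<close>
lemma bids_Suc_0: "bids y (Suc 0) = spread_bid"
  by (simp add: bids_def)

lemma alloc_equilibrium:
  assumes "J < m" "j < m"
  shows "alloc tie 2 m (bids (coordinate_valuation J)) 0 j = (if j = J then s * \<sigma> else 0)"
    and "alloc tie 2 m (bids (coordinate_valuation J)) 1 j = (if j = J then \<sigma> else 1)"
proof -
  have "s * \<sigma>^2 + \<sigma>^2 = \<sigma> * (s * \<sigma> + \<sigma>)"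
    by (simp add: power2_eq_square algebra_simps)
  then have total: "s * \<sigma>^2 + \<sigma>^2 = \<sigma>"
    by (simp add: s_sigma)
  have "0 < bids (coordinate_valuation J) 0 j + bids (coordinate_valuation J) 1 j"
    using assms sigma_pos s_ge_1 by (simp add: bids_coordinate_valuation bids_Suc_0 spread_bid_def add_nonneg_pos)
  note alloc = alloc_two_agents[where b = "bids (coordinate_valuation J)", OF assms(2) this]
  show "alloc tie 2 m (bids (coordinate_valuation J)) 0 j = (if j = J then s * \<sigma> else 0)"
    "alloc tie 2 m (bids (coordinate_valuation J)) 1 j = (if j = J then \<sigma> else 1)"
    unfolding alloc using assms total sigma_pos
    by (auto simp: bids_coordinate_valuation bids_Suc_0 spread_bid_def power2_eq_square)
qed

lemma min_share_agent_1:
  assumes "J < m"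
  shows "Min ((\<lambda>j. alloc tie 2 m (bids (coordinate_valuation J)) 1 j) ` {..<m}) = \<sigma>"
proof (rule Min_eqI)
  have "\<sigma> \<le> 1" using s_ge_1 by (simp add: \<sigma>_def)
  moreover
  fix y assume "y \<in> (\<lambda>j. alloc tie 2 m (bids (coordinate_valuation J)) 1 j) ` {..<m}"
  then obtain j where "j < m" "y = alloc tie 2 m (bids (coordinate_valuation J)) 1 j" by blast
  ultimately show "\<sigma> \<le> y" using alloc_equilibrium(2)[OF assms \<open>j < m\<close>, of tie] by simp
next
  show "\<sigma> \<in> (\<lambda>j. alloc tie 2 m (bids (coordinate_valuation J)) 1 j) ` {..<m}"
    using alloc_equilibrium(2)[OF assms assms, of tie] assms by (intro image_eqI[of _ _ J]) auto
qed simp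

lemma welfare_equilibrium:
  assumes "J < m"
  shows "SW_bids tie 2 m (profile (coordinate_valuation J)) (bids (coordinate_valuation J)) = 2 * s * \<sigma>"
  using assms alloc_equilibrium(1)[OF assms assms] min_share_agent_1[OF assms]
  by (simp add: SW_bids_def sum_lessThan_2 profile_def coordinate_valuation_def leontief_valuation_def)

lemma utility_agent_0_equilibrium:
  assumes "J < m"
  shows "utility tie 2 m (coordinate_valuation J) (bids (coordinate_valuation J)) 0 = (1 - \<sigma>)^2"
proof -
  have "payment m (bids (coordinate_valuation J)) 0 = s * \<sigma>^2"
    using assms by (simp add: payment_def bids_coordinate_valuation bids_Suc_0)
  then have "utility tie 2 m (coordinate_valuation J) (bids (coordinate_valuation J)) 0
      = (s * \<sigma>) * (1 - \<sigma>)"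
    using alloc_equilibrium(1)[OF assms assms]
    by (simp add: utility_def coordinate_valuation_def power2_eq_square algebra_simps)
  then show ?thesis by (simp add: s_sigma power2_eq_square)
qed

lemma utility_agent_0_deviation:
  assumes "J < m" "valid_bid m b'"
  shows "utility tie 2 m (coordinate_valuation J) ((bids (coordinate_valuation J))(0 := b')) 0 \<le> (1 - \<sigma>)^2"
proof -
  let ?b = "(bids (coordinate_valuation J))(0 := b')"
  have b'_nonneg: "0 \<le> b' J" using assms(2) by (simp add: valid_bid_def)
  have "0 < ?b 0 J + ?b 1 J"
    using assms(1) b'_nonneg sigma_pos by (simp add: bids_coordinate_valuation bids_Suc_0 spread_bid_def add_nonneg_pos)
  then have "alloc tie 2 m ?b 0 J = b' J / (b' J + 1 * \<sigma>^2)"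
    using assms(1) by (simp add: alloc_two_agents bids_coordinate_valuation bids_Suc_0 spread_bid_def)
  moreover have "b' J \<le> payment m ?b 0"
    using assms by (auto simp: payment_def valid_bid_def intro: member_le_sum)
  ultimately have "utility tie 2 m (coordinate_valuation J) ?b 0 \<le> b' J / (b' J + 1 * \<sigma>^2) - 1 * b' J"
    by (simp add: utility_def coordinate_valuation_def)
  also have "\<dots> \<le> (1 - 1 * \<sigma>)^2"
    using b'_nonneg sigma_pos by (intro proportional_share_gain_le) auto
  finally show ?thesis by simp
qed

lemma utility_agent_1_equilibrium:
  assumes "J < m"
  shows "utility tie 2 m (leontief_valuation m s) (bids (coordinate_valuation J)) 1 = s * \<sigma>^2"
proof -
  have "payment m (bids (coordinate_valuation J)) 1 = s^2 * \<sigma>^2"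
    by (simp add: payment_def bids_coordinate_valuation bids_Suc_0 spread_bid_def s_squared)
  then have "utility tie 2 m (leontief_valuation m s) (bids (coordinate_valuation J)) 1
      = (s * \<sigma>) * (1 - s * \<sigma>)"
    using min_share_agent_1[OF assms, of tie]
    by (simp add: utility_def leontief_valuation_def power2_eq_square algebra_simps)
  also have "\<dots> = s * \<sigma>^2"
    using s_sigma by (simp add: power2_eq_square)
  finally show ?thesis .
qed

lemma utility_agent_1_deviation:
  assumes "J < m" "valid_bid m b'"
  shows "utility tie 2 m (leontief_valuation m s) ((bids (coordinate_valuation J))(1 := b')) 1
    \<le> s * (b' J / (b' J + s * \<sigma>^2)) - (\<Sum>j<m. b' j)"
proof -
  let ?b = "(bids (coordinate_valuation J))(1 := b')"
  have "0 < ?b 0 J + ?b 1 J"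
    using assms s_ge_1 sigma_pos
    by (simp add: bids_coordinate_valuation bids_Suc_0 valid_bid_def add_pos_nonneg)
  then have "alloc tie 2 m ?b 1 J = b' J / (b' J + s * \<sigma>^2)"
    using assms(1) by (simp add: alloc_two_agents bids_coordinate_valuation bids_Suc_0 add.commute)
  moreover have "Min ((\<lambda>j. alloc tie 2 m ?b 1 j) ` {..<m}) \<le> alloc tie 2 m ?b 1 J"
    using assms(1) by (intro Min_le) auto
  ultimately have "s * Min ((\<lambda>j. alloc tie 2 m ?b 1 j) ` {..<m}) \<le> s * (b' J / (b' J + s * \<sigma>^2))"
    using s_ge_1 by (intro mult_left_mono) auto
  then show ?thesis by (simp add: utility_def payment_def leontief_valuation_def)
qed

lemma no_profitable_deviation_agent_1:
  assumes "valid_bid m b'"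
  shows "(\<Sum>J<m. utility tie 2 m (leontief_valuation m s) ((bids (coordinate_valuation J))(1 := b')) 1)
    \<le> (\<Sum>J<m. utility tie 2 m (leontief_valuation m s) (bids (coordinate_valuation J)) 1)"
proof -
  have "(\<Sum>J<m. utility tie 2 m (leontief_valuation m s) ((bids (coordinate_valuation J))(1 := b')) 1)
      \<le> (\<Sum>J<m. s * (b' J / (b' J + s * \<sigma>^2)) - (\<Sum>j<m. b' j))"
    using assms by (intro sum_mono utility_agent_1_deviation) auto
  also have "\<dots> = (\<Sum>J<m. s * (b' J / (b' J + s * \<sigma>^2) - s * b' J))"
    using s_squared
    by (simp add: sum_subtractf right_diff_distrib sum_distrib_left power2_eq_square mult.assoc[symmetric])
  also have "\<dots> \<le> (\<Sum>J<m. s * (1 - s * \<sigma>)^2)"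
    using assms s_ge_1 sigma_pos
    by (intro sum_mono mult_left_mono proportional_share_gain_le) (auto simp: valid_bid_def)
  also have "\<dots> = (\<Sum>J<m. utility tie 2 m (leontief_valuation m s) (bids (coordinate_valuation J)) 1)"
    using s_sigma utility_agent_1_equilibrium by (intro sum.cong) auto
  finally show ?thesis .
qed

lemma OPT_profile_ge:
  assumes "J < m"
  shows "s \<le> OPT 2 m (profile (coordinate_valuation J))"
proof -
  define all_to_1 where "all_to_1 = (\<lambda>(i::nat) j. if i = 1 \<and> j < m then 1 else 0 :: real)"
  have "all_to_1 \<in> feasible 2 m"
    by (simp add: feasible_def all_to_1_def sum_lessThan_2)
  moreover have "\<forall>i<2. is_valuation m (profile (coordinate_valuation J) i)"
    using concave_valuation_coordinate[OF assms] concave_valuation_leontief[OF m_pos] s_ge_1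
    by (auto simp: profile_def concave_valuation_def less_2_cases_iff)
  moreover have "welfare 2 (profile (coordinate_valuation J)) all_to_1 = s"
  proof -
    have "(\<lambda>j. all_to_1 1 j) ` {..<m} = {1}"
      using lessThan_m_nonempty by (auto simp: all_to_1_def)
    then show ?thesis
      by (simp add: welfare_def sum_lessThan_2 profile_def all_to_1_def
          coordinate_valuation_def leontief_valuation_def)
  qed
  ultimately show ?thesis by (metis welfare_le_OPT)
qed

lemma expected_welfare: "exp_SW tie m 2 prior strategy = 2 * s * \<sigma>"
proof -
  have "exp_SW tie m 2 prior strategy = (\<Sum>J<m. 2 * s * \<sigma>) / real m"
    unfolding exp_SW_def expectation_prior bdist_strategy
    by (simp add: bids_profile welfare_equilibrium)
  then show ?thesis using m_pos by simp
qed

lemma expected_OPT_ge: "s \<le> exp_OPT m 2 prior"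
proof -
  have "(\<Sum>J<m. s) / real m \<le> (\<Sum>J<m. OPT 2 m (profile (coordinate_valuation J))) / real m"
    by (intro divide_right_mono sum_mono OPT_profile_ge) auto
  then show ?thesis using m_pos by (simp add: exp_OPT_def expectation_prior)
qed

lemma is_BNE_strategy: "is_BNE tie m 2 prior strategy"
  unfolding is_BNE_def
proof (intro allI impI ballI, goal_cases)
  case (1 i vi b')
  consider "i = 0" | "i = 1" using \<open>i < 2\<close> by linarith
  then show ?case
  proof cases
    case 1
    then obtain J where "J < m" "vi = coordinate_valuation J"
      using \<open>vi \<in> set_pmf (prior i)\<close> set_pmf_prior_0 by auto
    then show ?thesis
      unfolding \<open>i = 0\<close> vdist_prior_update_0 bdist_strategy
      using utility_agent_0_deviation[OF _ \<open>valid_bid m b'\<close>] utility_agent_0_equilibrium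
      by (simp add: bids_profile)
  next
    case 2
    then have vi: "vi = leontief_valuation m s"
      using \<open>vi \<in> set_pmf (prior i)\<close> by (simp add: prior_def)
    have prior_unchanged: "prior(i := return_pmf vi) = prior"
      using \<open>i = 1\<close> vi by (auto simp: prior_def fun_eq_iff)
    show ?thesis
      unfolding prior_unchanged
      unfolding vi \<open>i = 1\<close> expectation_prior bdist_strategy
      using divide_right_mono[OF no_profitable_deviation_agent_1[OF \<open>valid_bid m b'\<close>]]
      by (simp add: bids_profile)
  qed
qed

end

text \<open>The tie rule is never consulted: in the instance every resource receives a positive total bid,
  even after a unilateral deviation.\<close>
theorem theorem1:
  fixes m :: nat and tie :: "nat \<Rightarrow> nat \<Rightarrow> nat \<Rightarrow> real"
  assumes "1 \<le> m" and "valid_tie_rule tie"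
  shows "\<exists>(n::nat) (D :: nat \<Rightarrow> valuation pmf) (B :: nat \<Rightarrow> valuation \<Rightarrow> bidvec pmf).
    1 \<le> n \<and>
    (\<forall>i<n. finite (set_pmf (D i)) \<and> (\<forall>v\<in>set_pmf (D i). concave_valuation m v)) \<and>
    strategies_ok m n D B \<and>
    is_BNE tie m n D B \<and>
    0 < exp_SW tie m n D B \<and>
    sqrt (real m) / 2 * exp_SW tie m n D B \<le> exp_OPT m n D"
proof -
  interpret sqrt_gap_instance m using assms(1) by unfold_locales
  have "\<forall>i<2. finite (set_pmf (prior i)) \<and> (\<forall>v\<in>set_pmf (prior i). concave_valuation m v)"
    using set_pmf_prior_0 concave_valuation_coordinate concave_valuation_leontief[OF assms(1)] s_ge_1
    by (auto simp: less_2_cases_iff prior_def)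
  moreover have "strategies_ok m 2 prior strategy"
    using sigma_pos s_ge_1
    by (auto simp: strategies_ok_def strategy_def valid_bid_def demand_bid_def spread_bid_def)
  moreover have "s / 2 * exp_SW tie m 2 prior strategy \<le> exp_OPT m 2 prior"
  proof -
    have "s / 2 * (2 * s * \<sigma>) \<le> s"
      using s_sigma sigma_pos s_ge_1 by (simp add: mult_left_le)
    then show ?thesis using expected_welfare expected_OPT_ge by simp
  qed
  ultimately show ?thesis
    unfolding s_def[symmetric]
    using is_BNE_strategy expected_welfare sigma_pos s_ge_1
    by (intro exI[of _ 2] exI[of _ prior] exI[of _ strategy]) auto
qed

end
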